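(* Let $\mathcal P,\mathcal Q$ be two matroids on the same finite ground set, and let $\mathcal D=\mathcal P\cap\mathcal Q$. Let $S,T\in\mathcal D$ be two sets of the same size $g$. Then there exist an ordering $s_1,\ldots,s_g$ of the elements of $S$ and an ordering $t_1,\ldots,t_g$ of the elements of $T$ such that for every $i=1,\ldots,g$ the set $S-s_1+t_1-s_2+t_2-\cdots+t_{i-1}-s_i$ belongs to $\mathcal D$, where the operations are performed left to right, $X+x$ denotes $X\cup\{x\}$ and $X-a$ denotes $X\setminus\{a\}$.
   Context: A simplicial complex is a family of subsets of a ground set closed under taking subsets. A matroid is a complex in which, for every subset $W$ of the ground set, all maximal members contained in $W$ have the same size. $\mathcal D=\mathcal P\cap\mathcal Q$ means $A\in\mathcal D$ iff $A\in\mathcal P$ and $A\in\mathcal Q$. *)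

theory Defs
  imports Main
begin

definition simplicial_complex :: "'a set \<Rightarrow> 'a set set \<Rightarrow> bool" where
  "simplicial_complex E F \<longleftrightarrow> F \<subseteq> Pow E \<and> (\<forall>A\<in>F. \<forall>B. B \<subseteq> A \<longrightarrow> B \<in> F)"

definition maximal_in :: "'a set set \<Rightarrow> 'a set \<Rightarrow> 'a set \<Rightarrow> bool" where
  "maximal_in F W A \<longleftrightarrow> A \<in> F \<and> A \<subseteq> W \<and> (\<forall>B\<in>F. A \<subseteq> B \<and> B \<subseteq> W \<longrightarrow> B = A)"

definition matroid :: "'a set \<Rightarrow> 'a set set \<Rightarrow> bool" where
  "matroid E F \<longleftrightarrow> simplicial_complex E F \<and>
     (\<forall>W \<subseteq> E. \<forall>A B. maximal_in F W A \<and> maximal_in F W B \<longrightarrow> card A = card B)"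

text \<open>exch_set S s t i = S - s_1 + t_1 - s_2 + t_2 - ... + t_(i-1) - s_i,
  lists 0-indexed, operations performed left to right.\<close>
fun exch_set :: "'a set \<Rightarrow> 'a list \<Rightarrow> 'a list \<Rightarrow> nat \<Rightarrow> 'a set" where
  "exch_set X s t 0 = X"
| "exch_set X s t (Suc 0) = X - {s ! 0}"
| "exch_set X s t (Suc (Suc i)) = (insert (t ! i) (exch_set X s t (Suc i))) - {s ! Suc i}"

end

theory Submission
  imports Defs
begin

text \<open>
  Common elements of \<open>S\<close> and \<open>T\<close> are exchanged for themselves first, so each intermediate
  set is a subset of \<open>S\<close>. For the rest, fix \<open>s\<^sub>0 \<in> S - T\<close> and put \<open>A = S - s\<^sub>0\<close>; then
  \<open>|A| < |T|\<close>, and it suffices to exchange the elements of \<open>A - T\<close> one at a time for elements of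
  \<open>T - A\<close> while staying in \<open>\<D> = \<P> \<inter> \<Q>\<close>. One such step: augment \<open>A\<close> in \<open>\<P>\<close> by some
  \<open>b \<in> T - A\<close>. If \<open>A + b \<in> \<Q>\<close>, any element of \<open>A - T\<close> may be dropped. Otherwise \<open>A + b\<close>
  contains a unique circuit of \<open>\<Q>\<close>, which is not contained in the independent set
  \<open>(A \<inter> T) + b\<close>; dropping an element \<open>x \<in> A - T\<close> of this circuit gives \<open>A + b - x \<in> \<D>\<close>.
\<close>

lemma card_insert_Diff_swap:
  "finite A \<Longrightarrow> x \<in> A \<Longrightarrow> b \<notin> A \<Longrightarrow> card (insert b (A - {x})) = card A"
  using card_Suc_Diff1[of A x] by simp

lemma matroid_subset_closed: "matroid E F \<Longrightarrow> A \<in> F \<Longrightarrow> B \<subseteq> A \<Longrightarrow> B \<in> F"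
  unfolding matroid_def simplicial_complex_def by blast

lemma matroid_subset_ground: "matroid E F \<Longrightarrow> A \<in> F \<Longrightarrow> A \<subseteq> E"
  unfolding matroid_def simplicial_complex_def by blast

lemma matroid_finite: "finite E \<Longrightarrow> matroid E F \<Longrightarrow> A \<in> F \<Longrightarrow> finite A"
  by (meson finite_subset matroid_subset_ground)

lemma matroid_maximal_card_eq:
  "matroid E F \<Longrightarrow> W \<subseteq> E \<Longrightarrow> maximal_in F W A \<Longrightarrow> maximal_in F W B \<Longrightarrow> card A = card B"
  unfolding matroid_def by blast

lemma matroid_extend_maximal:
  assumes "finite E" "matroid E F" "A \<in> F" "A \<subseteq> W" "W \<subseteq> E"
  obtains M where "maximal_in F W M" "A \<subseteq> M"
proof -
  let ?K = "\<lambda>B. B \<in> F \<and> A \<subseteq> B \<and> B \<subseteq> W"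
  have "finite W" using assms(1,5) finite_subset by blast
  then have "\<forall>B. ?K B \<longrightarrow> card B < Suc (card W)"
    by (meson card_mono le_imp_less_Suc)
  from ex_has_greatest_nat[of ?K A card, OF _ this] assms(3,4)
  obtain M where M: "?K M" and greatest: "\<And>B. ?K B \<Longrightarrow> card B \<le> card M" by blast
  have "maximal_in F W M"
    unfolding maximal_in_def
  proof (intro conjI ballI impI)
    fix B assume B: "B \<in> F" "M \<subseteq> B \<and> B \<subseteq> W"
    with M have "card B \<le> card M" using greatest by blast
    moreover have "finite B" using B \<open>finite W\<close> finite_subset by blast
    ultimately show "B = M" using B card_seteq by blast
  qed (use M in auto)
  with M that show ?thesis by blast
qed

lemma matroid_augment:
  assumes "finite E" "matroid E F" "A \<in> F" "B \<in> F" "card A < card B"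
  obtains b where "b \<in> B - A" "insert b A \<in> F"
proof -
  have W: "A \<union> B \<subseteq> E" using assms(2-4) matroid_subset_ground by blast
  obtain M1 where M1: "maximal_in F (A \<union> B) M1" "A \<subseteq> M1"
    using matroid_extend_maximal[OF assms(1-3) _ W] by blast
  obtain M2 where M2: "maximal_in F (A \<union> B) M2" "B \<subseteq> M2"
    using matroid_extend_maximal[OF assms(1,2,4) _ W] by blast
  have "finite M2" using M2(1) assms(1,2) matroid_finite unfolding maximal_in_def by blast
  have "card B \<le> card M1"
    using matroid_maximal_card_eq[OF assms(2) W M1(1) M2(1)] card_mono[OF \<open>finite M2\<close> M2(2)]
    by simp
  with assms(5) have "M1 \<noteq> A" by auto
  with M1(2) obtain b where b: "b \<in> M1" "b \<notin> A" by blast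
  moreover have "M1 \<in> F" "M1 \<subseteq> A \<union> B" using M1(1) unfolding maximal_in_def by auto
  ultimately show ?thesis
    using that matroid_subset_closed[OF assms(2), of M1 "insert b A"] M1(2) by blast
qed

text \<open>The circuit of \<open>insert t A\<close> is not contained in \<open>B\<close>; removing one of its elements outside \<open>B\<close>
  restores independence.\<close>
lemma matroid_insert_exchange:
  assumes "finite E" "matroid E F" "A \<in> F" "insert t A \<notin> F" "B \<in> F" "t \<in> B" "B \<subseteq> insert t A"
  obtains x where "x \<in> A - B" "insert t (A - {x}) \<in> F"
proof -
  have W: "insert t A \<subseteq> E" using assms(2,3,5,6) matroid_subset_ground by blast
  have "finite A" using assms(1-3) matroid_finite by blast
  have "t \<notin> A" using assms(3,4) by (auto simp: insert_absorb)
  obtain M where M: "maximal_in F (insert t A) M" "B \<subseteq> M"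
    using matroid_extend_maximal[OF assms(1,2,5,7) W] by blast
  have M_sub: "M \<in> F" "M \<subseteq> insert t A" using M(1) unfolding maximal_in_def by auto
  have "maximal_in F (insert t A) A"
    unfolding maximal_in_def
  proof (intro conjI ballI impI)
    fix C assume C: "C \<in> F" "A \<subseteq> C \<and> C \<subseteq> insert t A"
    have "t \<notin> C"
    proof
      assume "t \<in> C"
      with C have "C = insert t A" by blast
      with C(1) assms(4) show False by simp
    qed
    with C show "C = A" by blast
  qed (use assms(3) in auto)
  then have card_M: "card M = card A"
    using matroid_maximal_card_eq[OF assms(2) W M(1)] by simp
  with \<open>finite A\<close> \<open>t \<notin> A\<close> have "M \<noteq> insert t A" by auto
  with M_sub(2) obtain x where x: "x \<in> insert t A" "x \<notin> M" by blast
  with M(2) assms(6) have x_in: "x \<in> A - B" by auto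
  have "M \<subseteq> insert t (A - {x})" using M_sub(2) x by blast
  moreover have "card (insert t (A - {x})) = card M"
    using card_M card_insert_Diff_swap \<open>finite A\<close> \<open>t \<notin> A\<close> x_in by (metis DiffD1)
  ultimately have "M = insert t (A - {x})"
    using \<open>finite A\<close> by (simp add: card_subset_eq)
  with M_sub(1) x_in that show ?thesis by blast
qed

lemma matroid_inter_exchange:
  assumes "finite E" "matroid E P" "matroid E Q"
    and "A \<in> P \<inter> Q" "B \<in> P \<inter> Q" "card A < card B" "\<not> A \<subseteq> B"
  obtains b x where "b \<in> B - A" "x \<in> A - B" "insert b (A - {x}) \<in> P \<inter> Q"
proof -
  from assms(4,5) have A: "A \<in> P" "A \<in> Q" and B: "B \<in> P" "B \<in> Q" by auto
  obtain b where b: "b \<in> B - A" "insert b A \<in> P"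
    using matroid_augment[OF assms(1,2) A(1) B(1) assms(6)] by blast
  have in_P: "insert b (A - {x}) \<in> P" for x
    by (rule matroid_subset_closed[OF assms(2) b(2)]) blast
  show ?thesis
  proof (cases "insert b A \<in> Q")
    case True
    obtain x where x: "x \<in> A - B" using assms(7) by blast
    have "insert b (A - {x}) \<in> Q"
      by (rule matroid_subset_closed[OF assms(3) True]) blast
    with that[OF b(1) x] in_P show ?thesis by blast
  next
    case False
    have "insert b (A \<inter> B) \<in> Q"
      by (rule matroid_subset_closed[OF assms(3) B(2)]) (use b(1) in blast)
    then obtain x where x: "x \<in> A - insert b (A \<inter> B)" "insert b (A - {x}) \<in> Q"
      using matroid_insert_exchange[OF assms(1,3) A(2) False _ insertI1 insert_mono[OF Int_lower1]]
      by blast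
    then have "x \<in> A - B" by blast
    with that[OF b(1)] x(2) in_P show ?thesis by blast
  qed
qed

lemma matroid_inter_exchange_sequence:
  assumes "finite E" "matroid E P" "matroid E Q"
    and "A \<in> P \<inter> Q" "B \<in> P \<inter> Q" "card A < card B"
  shows "\<exists>xs ts. distinct xs \<and> set xs = A - B \<and> distinct ts \<and> set ts \<subseteq> B - A \<and>
           length ts = length xs \<and>
           (\<forall>j\<le>length xs. (A - set (take j xs)) \<union> set (take j ts) \<in> P \<inter> Q)"
  using assms(4,6)
proof (induction "card (A - B)" arbitrary: A)
  case 0
  have "finite A" using assms(1,2) "0.prems"(1) matroid_finite by blast
  with "0.hyps" have "A - B = {}" by simp
  with "0.prems"(1) show ?case by (intro exI[of _ "[]"]) auto
next
  case (Suc n)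
  have "finite A" using assms(1,2) Suc.prems(1) matroid_finite by blast
  have "A - B \<noteq> {}" using Suc.hyps(2) by force
  then have "\<not> A \<subseteq> B" by blast
  then obtain b x where b: "b \<in> B - A" and x: "x \<in> A - B"
    and A': "insert b (A - {x}) \<in> P \<inter> Q"
    using matroid_inter_exchange[OF assms(1-3) Suc.prems(1) assms(5) Suc.prems(2)] by blast
  let ?A' = "insert b (A - {x})"
  have "?A' - B = (A - B) - {x}" using b by blast
  then have "n = card (?A' - B)" using Suc.hyps(2) x \<open>finite A\<close> by simp
  moreover have "card ?A' = card A" using b x \<open>finite A\<close> card_insert_Diff_swap by (metis DiffD1 DiffD2)
  ultimately obtain xs ts where
    IH: "distinct xs" "set xs = ?A' - B" "distinct ts" "set ts \<subseteq> B - ?A'" "length ts = length xs"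
      "\<forall>j\<le>length xs. (?A' - set (take j xs)) \<union> set (take j ts) \<in> P \<inter> Q"
    using Suc.hyps(1) A' Suc.prems(2) by metis
  have step: "(A - set (take (Suc j) (x # xs))) \<union> set (take (Suc j) (b # ts))
      = (?A' - set (take j xs)) \<union> set (take j ts)" for j
    using b IH(2) set_take_subset[of j xs] by auto
  have "(A - set (take j (x # xs))) \<union> set (take j (b # ts)) \<in> P \<inter> Q"
    if "j \<le> length (x # xs)" for j
  proof (cases j)
    case 0
    with Suc.prems(1) show ?thesis by simp
  next
    case (Suc j')
    with that IH(6) step[of j'] show ?thesis by (simp del: take_Suc_Cons)
  qed
  moreover have "distinct (x # xs)" "set (x # xs) = A - B" using IH(1,2) b x by auto
  moreover have "distinct (b # ts)" "set (b # ts) \<subseteq> B - A" using IH(3,4) b x by auto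
  ultimately show ?case using IH(5) by (intro exI[of _ "x # xs"] exI[of _ "b # ts"]) auto
qed

lemma exch_set_take:
  assumes "\<forall>k\<le>i. s ! k \<notin> set (take k t)" "i < length s" "i \<le> length t"
  shows "exch_set X s t (Suc i) = (X - set (take (Suc i) s)) \<union> set (take i t)"
  using assms
proof (induction i)
  case 0
  then show ?case by (cases s) auto
next
  case (Suc i)
  have "take (Suc i) t = take i t @ [t ! i]" "take (Suc (Suc i)) s = take (Suc i) s @ [s ! Suc i]"
    using Suc.prems(2,3) by (simp_all add: take_Suc_conv_app_nth)
  with Suc show ?case by auto
qed

lemma nth_notin_take_append:
  assumes "distinct (cs @ u)" "set u \<inter> set v = {}" "k < length (cs @ u)"
  shows "(cs @ u) ! k \<notin> set (take k (cs @ v))"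
proof (cases "k < length cs")
  case True
  then show ?thesis using assms(1) by (auto simp: nth_append in_set_conv_nth nth_eq_iff_index_eq)
next
  case False
  then have "(cs @ u) ! k \<in> set u" using assms(3) by (simp add: nth_append)
  moreover have "set (take k (cs @ v)) \<subseteq> set cs \<union> set v"
    by (metis set_append set_take_subset)
  ultimately show ?thesis using assms(1,2) by auto
qed

lemma matroid_inter_exchange_orderings:
  assumes "finite E" "matroid E P" "matroid E Q"
    and "S \<in> P \<inter> Q" "T \<in> P \<inter> Q" "card S = card T"
  obtains s t where "distinct s" "set s = S" "distinct t" "set t = T"
    "\<forall>k<length s. s ! k \<notin> set (take k t)"
    "\<forall>i<length s. (S - set (take (Suc i) s)) \<union> set (take i t) \<in> P \<inter> Q"
proof -
  have "finite S" "finite T" using assms(1,2,4,5) matroid_finite by blast+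
  have sub_S: "X \<in> P \<inter> Q" if "X \<subseteq> S" for X
    using matroid_subset_closed[OF assms(2) _ that] matroid_subset_closed[OF assms(3) _ that] assms(4)
    by blast
  obtain cs where cs: "distinct cs" "set cs = S \<inter> T"
    using finite_distinct_list[of "S \<inter> T"] \<open>finite S\<close> by blast
  show ?thesis
  proof (cases "S \<subseteq> T")
    case True
    with \<open>finite T\<close> assms(6) have "S = T" by (simp add: card_subset_eq)
    have "\<forall>k<length cs. cs ! k \<notin> set (take k cs)"
      using nth_notin_take_append[of cs "[]" "[]"] cs(1) by simp
    moreover have "(S - set (take (Suc i) cs)) \<union> set (take i cs) \<in> P \<inter> Q" for i
      using cs(2) set_take_subset[of i cs] by (intro sub_S) blast
    ultimately show ?thesis using that[of cs cs] cs \<open>S = T\<close> by auto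
  next
    case False
    then obtain s0 where s0: "s0 \<in> S" "s0 \<notin> T" by blast
    let ?A = "S - {s0}"
    have "card ?A < card T" using card_Diff1_less[OF \<open>finite S\<close> s0(1)] assms(6) by simp
    then obtain xs ts where xs: "distinct xs" "set xs = ?A - T"
      and ts: "distinct ts" "set ts \<subseteq> T - ?A" "length ts = length xs"
      and chain: "\<forall>j\<le>length xs. (?A - set (take j xs)) \<union> set (take j ts) \<in> P \<inter> Q"
      using matroid_inter_exchange_sequence[OF assms(1-3) sub_S[OF Diff_subset] assms(5)] by blast
    obtain rest where rest: "distinct rest" "set rest = T - S - set ts"
      using finite_distinct_list[of "T - S - set ts"] \<open>finite T\<close> by blast
    define s where "s = cs @ s0 # xs"
    define t where "t = cs @ ts @ rest"
    have disjoint: "set (s0 # xs) \<inter> set (ts @ rest) = {}" using xs ts rest s0 by auto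
    have "distinct s" "set s = S" "distinct t" "set t = T"
      unfolding s_def t_def using cs xs ts rest s0 by auto
    moreover have "\<forall>k<length s. s ! k \<notin> set (take k t)"
      using nth_notin_take_append[OF \<open>distinct s\<close>[unfolded s_def] disjoint]
      unfolding s_def t_def by blast
    moreover have "(S - set (take (Suc i) s)) \<union> set (take i t) \<in> P \<inter> Q"
      if "i < length s" for i
    proof (cases "i < length cs")
      case True
      then have "set (take i t) \<subseteq> S" using cs(2) set_take_subset[of i cs] by (simp add: t_def)
      then show ?thesis by (intro sub_S) blast
    next
      case False
      define j where "j = i - length cs"
      have "j \<le> length xs" using that False by (simp add: s_def j_def)
      then have "take (Suc i) s = cs @ s0 # take j xs" "take i t = cs @ take j ts"
        using False ts(3) by (simp_all add: s_def t_def j_def Suc_diff_le)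
      then have "(S - set (take (Suc i) s)) \<union> set (take i t) = (?A - set (take j xs)) \<union> set (take j ts)"
        using cs xs s0 set_take_subset[of j xs] by auto
      with chain \<open>j \<le> length xs\<close> show ?thesis by simp
    qed
    ultimately show ?thesis using that by blast
  qed
qed

theorem theorem3p1:
  fixes E :: "'a set" and P Q :: "'a set set" and S T :: "'a set" and g :: nat
  assumes "finite E"
    and "matroid E P" and "matroid E Q"
    and "S \<in> P \<inter> Q" and "T \<in> P \<inter> Q"
    and "card S = g" and "card T = g"
  shows "\<exists>s t. distinct s \<and> set s = S \<and> length s = g \<and>
               distinct t \<and> set t = T \<and> length t = g \<and>
               (\<forall>i\<in>{1..g}. exch_set S s t i \<in> P \<inter> Q)"
proof -
  obtain s t where st: "distinct s" "set s = S" "distinct t" "set t = T"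
    and no_return: "\<forall>k<length s. s ! k \<notin> set (take k t)"
    and stays: "\<forall>i<length s. (S - set (take (Suc i) s)) \<union> set (take i t) \<in> P \<inter> Q"
    using matroid_inter_exchange_orderings[OF assms(1-5)] assms(6,7) by metis
  have len: "length s = g" "length t = g" using st assms(6,7) distinct_card by metis+
  have "exch_set S s t i \<in> P \<inter> Q" if i: "i \<in> {1..g}" for i
  proof -
    obtain i' where i': "i = Suc i'" "i' < g" using i by (cases i) auto
    with len no_return have "exch_set S s t i = (S - set (take (Suc i') s)) \<union> set (take i' t)"
      by (simp add: exch_set_take)
    with stays len i' show ?thesis by simp
  qed
  with st len show ?thesis by blast
qed

end
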